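(* Let $n\ge 1$, $N=\{1,\dots,n\}$, $A=(a_{ij})\in[0,1]^{n\times n}$ and $\lambda\in[0,+\infty)$. If for every $k=(k_1,\dots,k_n)\in K$ the system $$q_{(k_j-1)j}\le x_j\le q_{k_jj}\ \text{ for all } j\in N,\qquad \sum_{j\in N}\big[\delta_{ij}\, x_j+(1-\delta_{ij})\, a_{ij}\big]=\lambda x_i\ \text{ for all } i\in N$$ has no solution $x\in[0,1]^n$ with $x\neq\theta$, then $V(A,\lambda)=\emptyset$.
   Context: $\theta=(0,\dots,0)\in[0,1]^n$. For $x\in[0,1]^n$ and $\lambda\in[0,+\infty)$, the equation $A\odot x^T=\lambda x^T$ means $\sum_{j\in N}\min\{a_{ij},x_j\}=\lambda x_i$ for every $i\in N$. $V(A,\lambda)=\{x\in[0,1]^n : A\odot x^T=\lambda x^T,\ x\neq\theta\}$. For each $j\in N$, let $t_j$ be the number of distinct values in $\{a_{ij}: i\in N\}\cap(0,1)$, list these values as $q_{1j}<\dots<q_{t_jj}$, and put $q_{0j}=0$, $q_{(t_j+1)j}=1$. Let $K_j=\{1,\dots,t_j+1\}$ (the indices $k$ with $q_{kj}>0$) and $K=K_1\times\dots\times K_n$. For $k\in K$ and $i,j\in N$, $\delta_{ij}=1$ if $q_{k_jj}\le a_{ij}$ and $\delta_{ij}=0$ if $a_{ij}\le q_{(k_j-1)j}$. *)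

theory Defs
  imports Main Complex_Main
begin

definition qvals :: "nat \<Rightarrow> (nat \<Rightarrow> nat \<Rightarrow> real) \<Rightarrow> nat \<Rightarrow> real list" where
  "qvals n A j = sorted_list_of_set ({A i j | i. i \<in> {1..n}} \<inter> {0<..<1})"

definition tcnt :: "nat \<Rightarrow> (nat \<Rightarrow> nat \<Rightarrow> real) \<Rightarrow> nat \<Rightarrow> nat" where
  "tcnt n A j = length (qvals n A j)"

text \<open>q n A k j = q_{kj}: q_{0j} = 0, q_{kj} = k-th smallest value for 1 <= k <= t_j,
  q_{(t_j+1)j} = 1.\<close>
definition q :: "nat \<Rightarrow> (nat \<Rightarrow> nat \<Rightarrow> real) \<Rightarrow> nat \<Rightarrow> nat \<Rightarrow> real" where
  "q n A k j = (if k = 0 then 0 else if k \<le> tcnt n A j then qvals n A j ! (k - 1) else 1)"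

definition Kset :: "nat \<Rightarrow> (nat \<Rightarrow> nat \<Rightarrow> real) \<Rightarrow> nat \<Rightarrow> nat set" where
  "Kset n A j = {1..tcnt n A j + 1}"

text \<open>delta_ij for a given k: 1 if q_{k_j j} <= a_ij, and 0 otherwise
  (otherwise means a_ij <= q_{(k_j-1)j}, since consecutive q's bracket no entry).\<close>
definition delta :: "nat \<Rightarrow> (nat \<Rightarrow> nat \<Rightarrow> real) \<Rightarrow> (nat \<Rightarrow> nat) \<Rightarrow> nat \<Rightarrow> nat \<Rightarrow> real" where
  "delta n A k i j = (if q n A (k j) j \<le> A i j then 1 else 0)"

definition in_unit_cube :: "nat \<Rightarrow> (nat \<Rightarrow> real) \<Rightarrow> bool" where
  "in_unit_cube n x \<longleftrightarrow> (\<forall>j\<in>{1..n}. 0 \<le> x j \<and> x j \<le> 1)"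

definition nonzero_vec :: "nat \<Rightarrow> (nat \<Rightarrow> real) \<Rightarrow> bool" where
  "nonzero_vec n x \<longleftrightarrow> (\<exists>j\<in>{1..n}. x j \<noteq> 0)"

text \<open>Eigenspace V(A,lambda) (max-min / "sum-min" product A \<odot> x^T = lambda x^T).
  Vectors are restricted to be 0 outside N so that they correspond to elements of [0,1]^n.\<close>
definition Veig :: "nat \<Rightarrow> (nat \<Rightarrow> nat \<Rightarrow> real) \<Rightarrow> real \<Rightarrow> (nat \<Rightarrow> real) set" where
  "Veig n A lam = {x. in_unit_cube n x \<and> (\<forall>j. j \<notin> {1..n} \<longrightarrow> x j = 0) \<and>
      (\<forall>i\<in>{1..n}. (\<Sum>j\<in>{1..n}. min (A i j) (x j)) = lam * x i) \<and> nonzero_vec n x}"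

end

theory Submission
  imports Defs
begin

text \<open>Every \<open>x \<in> V(A,\<lambda>)\<close> lies in some cell \<open>q\<^bsub>(k\<^sub>j-1)j\<^esub> \<le> x\<^sub>j \<le> q\<^bsub>k\<^sub>jj\<^esub>\<close>.
  No entry \<open>a\<^sub>i\<^sub>j\<close> of column \<open>j\<close> lies strictly between two consecutive \<open>q\<close>-values, so on that
  cell \<open>min(a\<^sub>i\<^sub>j, x\<^sub>j)\<close> is \<open>x\<^sub>j\<close> when \<open>\<delta>\<^sub>i\<^sub>j = 1\<close> and \<open>a\<^sub>i\<^sub>j\<close> when \<open>\<delta>\<^sub>i\<^sub>j = 0\<close>; hence \<open>x\<close>
  solves the linear system of the cell \<open>k\<close>, contradicting the hypothesis.\<close>

lemma set_qvals: "set (qvals n A j) = {A i j | i. i \<in> {1..n}} \<inter> {0<..<1}"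
  unfolding qvals_def by simp

lemma sorted_qvals: "sorted (qvals n A j)"
  unfolding qvals_def by simp

lemma q_nonneg: "0 \<le> q n A k j"
  and q_le_one: "q n A k j \<le> 1"
proof -
  have "qvals n A j ! (k - 1) \<in> {0<..<1}" if "0 < k" "k \<le> tcnt n A j"
    using that nth_mem[of "k - 1" "qvals n A j"] set_qvals[of n A j]
    unfolding tcnt_def by fastforce
  then show "0 \<le> q n A k j" "q n A k j \<le> 1"
    unfolding q_def by auto
qed

lemma q_0 [simp]: "q n A 0 j = 0"
  unfolding q_def by simp

lemma q_beyond_tcnt: "tcnt n A j < k \<Longrightarrow> q n A k j = 1"
  unfolding q_def by simp

lemma q_mono:
  assumes "k \<le> l"
  shows "q n A k j \<le> q n A l j"
proof (cases "k = 0 \<or> tcnt n A j < l")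
  case True
  then show ?thesis
    using q_nonneg[of n A l j] q_le_one[of n A k j] q_beyond_tcnt[of n A j l] by auto
next
  case False
  with assms have "qvals n A j ! (k - 1) \<le> qvals n A j ! (l - 1)"
    by (intro sorted_nth_mono[OF sorted_qvals]) (auto simp: tcnt_def)
  with False assms show ?thesis
    unfolding q_def by auto
qed

lemma entry_is_q:
  assumes "i \<in> {1..n}" "0 < A i j" "A i j < 1"
  obtains m where "1 \<le> m" "q n A m j = A i j"
proof -
  have "A i j \<in> set (qvals n A j)"
    using set_qvals[of n A j] assms by auto
  then obtain p where "p < tcnt n A j" "qvals n A j ! p = A i j"
    unfolding tcnt_def by (metis in_set_conv_nth)
  then have "q n A (Suc p) j = A i j"
    unfolding q_def by simp
  then show ?thesis
    by (intro that[of "Suc p"]) simp_all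
qed

lemma cell_exists:
  fixes v :: real
  assumes "0 \<le> v" "v \<le> 1"
  obtains k where "k \<in> Kset n A j" "q n A (k - 1) j \<le> v" "v \<le> q n A k j"
proof -
  define k where "k = (LEAST k. 1 \<le> k \<and> v \<le> q n A k j)"
  have top: "1 \<le> tcnt n A j + 1 \<and> v \<le> q n A (tcnt n A j + 1) j"
    using assms q_beyond_tcnt[of n A j] by simp
  have k: "1 \<le> k" "v \<le> q n A k j"
    using LeastI[of "\<lambda>k. 1 \<le> k \<and> v \<le> q n A k j", OF top] unfolding k_def by auto
  have "k \<le> tcnt n A j + 1"
    unfolding k_def using top by (rule Least_le)
  with k have "k \<in> Kset n A j"
    unfolding Kset_def by simp
  moreover have "q n A (k - 1) j \<le> v"
  proof (cases "k = 1")
    case True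
    then show ?thesis using assms by simp
  next
    case False
    have "k - 1 < k"
      using k by simp
    then have "\<not> (1 \<le> k - 1 \<and> v \<le> q n A (k - 1) j)"
      using not_less_Least[of "k - 1" "\<lambda>k. 1 \<le> k \<and> v \<le> q n A k j"]
      unfolding k_def by blast
    with False k show ?thesis by auto
  qed
  ultimately show ?thesis
    using k that by blast
qed

lemma delta_combination_eq_min:
  assumes i: "i \<in> {1..n}"
    and cell: "q n A (k j - 1) j \<le> v" "v \<le> q n A (k j) j"
  shows "delta n A k i j * v + (1 - delta n A k i j) * A i j = min (A i j) v"
proof (cases "q n A (k j) j \<le> A i j")
  case True
  then show ?thesis
    using cell unfolding delta_def by simp
next
  case below: False
  have "A i j \<le> v"
  proof (cases "0 < A i j")
    case True
    moreover have "A i j < 1"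
      using below q_le_one[of n A "k j" j] by simp
    ultimately obtain m where m: "1 \<le> m" "q n A m j = A i j"
      using entry_is_q[OF i] by blast
    have "m < k j"
      using below m q_mono[of "k j" m n A j] by force
    then have "q n A m j \<le> q n A (k j - 1) j"
      by (intro q_mono) simp
    with m cell show ?thesis by simp
  next
    case False
    then show ?thesis
      using cell q_nonneg[of n A "k j - 1" j] by simp
  qed
  with below show ?thesis
    unfolding delta_def by simp
qed

lemma eigenvector_solves_cell_system:
  assumes "x \<in> Veig n A lam"
  obtains k where "\<forall>j\<in>{1..n}. k j \<in> Kset n A j"
    and "\<forall>j\<in>{1..n}. q n A (k j - 1) j \<le> x j \<and> x j \<le> q n A (k j) j"
    and "\<forall>i\<in>{1..n}. (\<Sum>j\<in>{1..n}. delta n A k i j * x j + (1 - delta n A k i j) * A i j)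
                     = lam * x i"
proof -
  have cube: "in_unit_cube n x"
    and eig: "\<forall>i\<in>{1..n}. (\<Sum>j\<in>{1..n}. min (A i j) (x j)) = lam * x i"
    using assms unfolding Veig_def by auto
  have "\<exists>kj. kj \<in> Kset n A j \<and> q n A (kj - 1) j \<le> x j \<and> x j \<le> q n A kj j"
    if "j \<in> {1..n}" for j
  proof -
    have "0 \<le> x j" "x j \<le> 1"
      using cube that unfolding in_unit_cube_def by auto
    then show ?thesis
      by (rule cell_exists) blast
  qed
  then obtain k where k: "\<forall>j\<in>{1..n}. k j \<in> Kset n A j \<and>
      q n A (k j - 1) j \<le> x j \<and> x j \<le> q n A (k j) j"
    by (metis bchoice)
  have "(\<Sum>j\<in>{1..n}. delta n A k i j * x j + (1 - delta n A k i j) * A i j) = lam * x i"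
    if i: "i \<in> {1..n}" for i
  proof -
    have "(\<Sum>j\<in>{1..n}. delta n A k i j * x j + (1 - delta n A k i j) * A i j)
        = (\<Sum>j\<in>{1..n}. min (A i j) (x j))"
      using k delta_combination_eq_min[OF i] by (intro sum.cong) auto
    with eig i show ?thesis by simp
  qed
  with k that show ?thesis by blast
qed

theorem theorem3p2:
  fixes n :: nat and A :: "nat \<Rightarrow> nat \<Rightarrow> real" and lam :: real
  assumes "n \<ge> 1"
    and "\<forall>i\<in>{1..n}. \<forall>j\<in>{1..n}. 0 \<le> A i j \<and> A i j \<le> 1"
    and "lam \<ge> 0"
    and "\<forall>k :: nat \<Rightarrow> nat. (\<forall>j\<in>{1..n}. k j \<in> Kset n A j) \<longrightarrow>
           \<not> (\<exists>x :: nat \<Rightarrow> real. in_unit_cube n x \<and> nonzero_vec n x \<and>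
                 (\<forall>j\<in>{1..n}. q n A (k j - 1) j \<le> x j \<and> x j \<le> q n A (k j) j) \<and>
                 (\<forall>i\<in>{1..n}. (\<Sum>j\<in>{1..n}. delta n A k i j * x j + (1 - delta n A k i j) * A i j)
                                = lam * x i))"
  shows "Veig n A lam = {}"
proof (rule ccontr)
  assume "Veig n A lam \<noteq> {}"
  then obtain x where x: "x \<in> Veig n A lam" by blast
  then have "in_unit_cube n x" "nonzero_vec n x"
    unfolding Veig_def by auto
  moreover obtain k where "\<forall>j\<in>{1..n}. k j \<in> Kset n A j"
    and "\<forall>j\<in>{1..n}. q n A (k j - 1) j \<le> x j \<and> x j \<le> q n A (k j) j"
    and "\<forall>i\<in>{1..n}. (\<Sum>j\<in>{1..n}. delta n A k i j * x j + (1 - delta n A k i j) * A i j)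
                     = lam * x i"
    using eigenvector_solves_cell_system[OF x] by blast
  ultimately show False
    using assms(4) by blast
qed

end
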